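(* Consider the system on $\mathbb{R}^2$ $$\dot x=f(x)=\begin{bmatrix}-x_1^3+x_1^5x_2\\ -x_2^3-x_1^6\end{bmatrix}$$ and the quadratic candidate $V(x)=c_0x_1^2+c_1x_2^2+c_2x_1x_2$ with real coefficients $c_0,c_1,c_2$, with Lie derivative $\dot V(x)=\nabla V(x)\cdot f(x)$. Let $\mu>0$ and let $\{y_j\}_{j=1}^N\subset\mathbb{R}^2\setminus\{0\}$ be any finite set of sample points. Then there exist $c_0,c_1,c_2$ with $c_0\ne c_1$ such that $V$ satisfies both (a) $V(y_j)>0$ and $\dot V(y_j)<0$ for all $j=1,\dots,N$; and (b) $V(y_j)\ge \mu\min(|y_j|^{l_V},|y_j|^{k_V})$ and $\dot V(y_j)\le -\mu\min(|y_j|^{l_{\dot V}},|y_j|^{k_{\dot V}})$ for all $j=1,\dots,N$, where $l_V,k_V$ (resp. $l_{\dot V},k_{\dot V}$) denote the lowest and highest total degrees of the monomials with nonzero coefficient in $V$ (resp. $\dot V$), and $|\cdot|$ is the Euclidean norm.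
   Context: Total degree of the monomial $x_1^{a}x_2^{b}$ is $a+b$. Note that $\dot V(x)=(2c_0-2c_1)x_1^6x_2-c_2x_1^7+c_2x_1^5x_2^2-2c_0x_1^4-2c_1x_2^4-c_2x_1^3x_2-c_2x_1x_2^3$. *)

theory Defs
  imports "HOL-Analysis.Analysis"
begin

text \<open>Points of R^2 are pairs (x1, x2) :: real \<times> real; the norm on real \<times> real
  is the Euclidean norm sqrt (x1^2 + x2^2).\<close>

definition f1 :: "real \<times> real \<Rightarrow> real" where
  "f1 x = - ((fst x)^3) + (fst x)^5 * snd x"
definition f2 :: "real \<times> real \<Rightarrow> real" where
  "f2 x = - ((snd x)^3) - (fst x)^6"

definition V :: "real \<Rightarrow> real \<Rightarrow> real \<Rightarrow> real \<times> real \<Rightarrow> real" where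
  "V c0 c1 c2 x = c0 * (fst x)^2 + c1 * (snd x)^2 + c2 * fst x * snd x"

text \<open>Lie derivative: grad V \<cdot> f, with dV/dx1 = 2 c0 x1 + c2 x2, dV/dx2 = 2 c1 x2 + c2 x1.\<close>
definition Vdot :: "real \<Rightarrow> real \<Rightarrow> real \<Rightarrow> real \<times> real \<Rightarrow> real" where
  "Vdot c0 c1 c2 x = (2 * c0 * fst x + c2 * snd x) * f1 x + (2 * c1 * snd x + c2 * fst x) * f2 x"

text \<open>Bivariate polynomials as coefficient maps (exponent pair (a,b) for x1^a x2^b).\<close>
definition pevl :: "(nat \<times> nat \<Rightarrow> real) \<Rightarrow> real \<times> real \<Rightarrow> real" where
  "pevl p x = (\<Sum>m\<in>{m. p m \<noteq> 0}. p m * (fst x) ^ fst m * (snd x) ^ snd m)"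

definition lowdeg :: "(nat \<times> nat \<Rightarrow> real) \<Rightarrow> nat" where
  "lowdeg p = Min ((\<lambda>m. fst m + snd m) ` {m. p m \<noteq> 0})"
definition highdeg :: "(nat \<times> nat \<Rightarrow> real) \<Rightarrow> nat" where
  "highdeg p = Max ((\<lambda>m. fst m + snd m) ` {m. p m \<noteq> 0})"

definition Vcoef :: "real \<Rightarrow> real \<Rightarrow> real \<Rightarrow> nat \<times> nat \<Rightarrow> real" where
  "Vcoef c0 c1 c2 m =
     (if m = (2,0) then c0 else if m = (0,2) then c1 else if m = (1,1) then c2 else 0)"

definition Vdotcoef :: "real \<Rightarrow> real \<Rightarrow> real \<Rightarrow> nat \<times> nat \<Rightarrow> real" where
  "Vdotcoef c0 c1 c2 m =
     (if m = (6,1) then 2*c0 - 2*c1 else if m = (7,0) then - c2 else if m = (5,2) then c2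
      else if m = (4,0) then - 2*c0 else if m = (0,4) then - 2*c1
      else if m = (3,1) then - c2 else if m = (1,3) then - c2 else 0)"

lemma pevl_superset:
  assumes "finite S" "{m. p m \<noteq> 0} \<subseteq> S"
  shows "pevl p x = (\<Sum>m\<in>S. p m * (fst x) ^ fst m * (snd x) ^ snd m)"
  unfolding pevl_def by (rule sum.mono_neutral_left) (use assms in auto)

lemma V_coef_ok: "V c0 c1 c2 x = pevl (Vcoef c0 c1 c2) x"
  by (subst pevl_superset[where S="{(2,0),(0,2),(1,1)}"])
     (auto simp: Vcoef_def V_def split: if_splits)

lemma Vdot_coef_ok: "Vdot c0 c1 c2 x = pevl (Vdotcoef c0 c1 c2) x"
  by (subst pevl_superset[where S="{(6,1),(7,0),(5,2),(4,0),(0,4),(3,1),(1,3)}"])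
     (auto simp: Vdotcoef_def Vdot_def f1_def f2_def algebra_simps power_def split: if_splits)

end

theory Submission
  imports Defs
begin

text \<open>Take c2 = 0, c0 = 2\<mu> and c1 = 2\<mu> + d with d > 0. Then V = 2\<mu> x1^2 + (2\<mu> + d) x2^2
  \<ge> \<mu> |x|^2, and the Lie derivative is -4\<mu>(x1^4 + x2^4) - 2d x2^4 - 2d x1^6 x2. The only
  indefinite term, the cross term 2d x1^6 x2, is absorbed by half of the negative definite quartic
  part once d is small enough at each of the finitely many samples, leaving
  Vdot \<le> -2\<mu>(x1^4 + x2^4) \<le> -\<mu> |x|^4. Since c0 \<noteq> c1, the monomials of Vdot are x1^4, x2^4
  and x1^6 x2, so the lowest degree is 4 and the minimum in (b) is at most |x|^4.\<close>

lemma V_diag: "V c0 c1 0 y = c0 * fst y ^ 2 + c1 * snd y ^ 2"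
  by (simp add: V_def)

lemma Vdot_diag:
  "Vdot c0 c1 0 y = 2 * (c0 - c1) * fst y ^ 6 * snd y - 2 * c0 * fst y ^ 4 - 2 * c1 * snd y ^ 4"
  by (simp add: Vdot_def f1_def f2_def algebra_simps power_def)

lemma lowdeg_Vcoef_diag: "c0 \<noteq> 0 \<Longrightarrow> c1 \<noteq> 0 \<Longrightarrow> lowdeg (Vcoef c0 c1 0) = 2"
  and highdeg_Vcoef_diag: "c0 \<noteq> 0 \<Longrightarrow> c1 \<noteq> 0 \<Longrightarrow> highdeg (Vcoef c0 c1 0) = 2"
proof -
  assume "c0 \<noteq> 0" "c1 \<noteq> 0"
  then have "{m. Vcoef c0 c1 0 m \<noteq> 0} = {(2,0), (0,2)}"
    by (auto simp: Vcoef_def split: if_splits)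
  then show "lowdeg (Vcoef c0 c1 0) = 2" "highdeg (Vcoef c0 c1 0) = 2"
    by (simp_all add: lowdeg_def highdeg_def)
qed

lemma lowdeg_Vdotcoef_diag:
  assumes "c0 \<noteq> 0" "c1 \<noteq> 0" "c0 \<noteq> c1"
  shows "lowdeg (Vdotcoef c0 c1 0) = 4"
proof -
  have "{m. Vdotcoef c0 c1 0 m \<noteq> 0} = {(6,1), (4,0), (0,4)}"
    using assms by (auto simp: Vdotcoef_def split: if_splits)
  then show ?thesis
    by (simp add: lowdeg_def)
qed

lemma power2_norm_prod: "norm (y :: real \<times> real) ^ 2 = fst y ^ 2 + snd y ^ 2"
  by (cases y) (simp add: norm_Pair)

lemma power4_norm_prod_le: "norm (y :: real \<times> real) ^ 4 \<le> 2 * (fst y ^ 4 + snd y ^ 4)"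
proof -
  have "norm y ^ 4 = (fst y ^ 2 + snd y ^ 2) ^ 2"
    by (simp flip: power2_norm_prod power_mult)
  also have "\<dots> \<le> 2 * (fst y ^ 4 + snd y ^ 4)"
    using zero_le_square[of "fst y ^ 2 - snd y ^ 2"]
    by (simp add: power2_eq_square power4_eq_xxxx algebra_simps)
  finally show ?thesis .
qed

lemma sum_power4_fst_snd_pos:
  fixes y :: "real \<times> real"
  assumes "y \<noteq> 0"
  shows "fst y ^ 4 + snd y ^ 4 > 0"
proof -
  have "fst y ^ 4 > 0 \<or> snd y ^ 4 > 0"
    using assms by (simp add: zero_less_power_eq prod_eq_iff)
  moreover have "fst y ^ 4 \<ge> 0" "snd y ^ 4 \<ge> 0"
    by simp_all
  ultimately show ?thesis
    by linarith
qed

lemma finite_exists_pos_multiple_below: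
  fixes g h :: "'a \<Rightarrow> real"
  assumes "finite Y" and pos: "\<And>y. y \<in> Y \<Longrightarrow> g y > 0"
  shows "\<exists>d>0. \<forall>y\<in>Y. d * \<bar>h y\<bar> \<le> g y"
proof -
  have "\<forall>\<^sub>F d in at_right 0. d * \<bar>h y\<bar> < g y" if "y \<in> Y" for y
  proof -
    have "((\<lambda>d. d * \<bar>h y\<bar>) \<longlongrightarrow> 0 * \<bar>h y\<bar>) (at_right 0)"
      by (intro tendsto_intros)
    then show ?thesis
      using pos[OF that] by (simp add: order_tendstoD(2))
  qed
  then have "\<forall>\<^sub>F d in at_right 0. 0 < d \<and> (\<forall>y\<in>Y. d * \<bar>h y\<bar> < g y)"
    by (intro eventually_conj eventually_at_right_less eventually_ball_finite \<open>finite Y\<close>) blast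
  then obtain d where "0 < d" "\<forall>y\<in>Y. d * \<bar>h y\<bar> < g y"
    using eventually_happens' trivial_limit_at_right_real by blast
  then show ?thesis
    by (auto intro: less_imp_le)
qed

lemma diag_candidate_bounds:
  fixes y :: "real \<times> real"
  assumes "\<mu> > 0" "d \<ge> 0"
    and cross: "d * \<bar>fst y ^ 6 * snd y\<bar> \<le> \<mu> * (fst y ^ 4 + snd y ^ 4)"
  shows "V (2 * \<mu>) (2 * \<mu> + d) 0 y \<ge> \<mu> * norm y ^ 2"
    and "Vdot (2 * \<mu>) (2 * \<mu> + d) 0 y \<le> - \<mu> * norm y ^ 4"
proof -
  show "V (2 * \<mu>) (2 * \<mu> + d) 0 y \<ge> \<mu> * norm y ^ 2"
    using assms(1,2) by (simp add: V_diag power2_norm_prod algebra_simps add_nonneg_nonneg)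
  have "- (d * (fst y ^ 6 * snd y)) \<le> d * \<bar>fst y ^ 6 * snd y\<bar>"
    using \<open>d \<ge> 0\<close> by (simp add: abs_if)
  moreover have "d * snd y ^ 4 \<ge> 0"
    using \<open>d \<ge> 0\<close> by simp
  ultimately have "Vdot (2 * \<mu>) (2 * \<mu> + d) 0 y \<le> - 2 * \<mu> * (fst y ^ 4 + snd y ^ 4)"
    using cross by (simp add: Vdot_diag algebra_simps)
  also have "\<dots> \<le> - \<mu> * norm y ^ 4"
    using power4_norm_prod_le[of y] \<open>\<mu> > 0\<close> by simp
  finally show "Vdot (2 * \<mu>) (2 * \<mu> + d) 0 y \<le> - \<mu> * norm y ^ 4" .
qed

lemma diag_candidate_conditions:
  fixes y :: "real \<times> real"
  assumes "\<mu> > 0" "d > 0" "y \<noteq> 0"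
    and cross: "d * \<bar>fst y ^ 6 * snd y\<bar> \<le> \<mu> * (fst y ^ 4 + snd y ^ 4)"
  defines "c0 \<equiv> 2 * \<mu>" and "c1 \<equiv> 2 * \<mu> + d"
  shows "V c0 c1 0 y > 0" and "Vdot c0 c1 0 y < 0"
    and "V c0 c1 0 y \<ge> \<mu> * min (norm y ^ lowdeg (Vcoef c0 c1 0)) (norm y ^ highdeg (Vcoef c0 c1 0))"
    and "Vdot c0 c1 0 y
      \<le> - \<mu> * min (norm y ^ lowdeg (Vdotcoef c0 c1 0)) (norm y ^ highdeg (Vdotcoef c0 c1 0))"
proof -
  have "c0 \<noteq> 0" "c1 \<noteq> 0" "c0 \<noteq> c1"
    using \<open>\<mu> > 0\<close> \<open>d > 0\<close> by (simp_all add: c0_def c1_def)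
  note degrees = lowdeg_Vcoef_diag[OF \<open>c0 \<noteq> 0\<close> \<open>c1 \<noteq> 0\<close>]
    highdeg_Vcoef_diag[OF \<open>c0 \<noteq> 0\<close> \<open>c1 \<noteq> 0\<close>] lowdeg_Vdotcoef_diag[OF \<open>c0 \<noteq> 0\<close> \<open>c1 \<noteq> 0\<close> \<open>c0 \<noteq> c1\<close>]
  have V_ge: "V c0 c1 0 y \<ge> \<mu> * norm y ^ 2" and Vdot_le: "Vdot c0 c1 0 y \<le> - \<mu> * norm y ^ 4"
    using diag_candidate_bounds[OF \<open>\<mu> > 0\<close> _ cross] \<open>d > 0\<close> by (simp_all add: c0_def c1_def)
  have "\<mu> * norm y ^ 2 > 0" "\<mu> * norm y ^ 4 > 0"
    using \<open>\<mu> > 0\<close> \<open>y \<noteq> 0\<close> by simp_all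
  then show "V c0 c1 0 y > 0" "Vdot c0 c1 0 y < 0"
    using V_ge Vdot_le by linarith+
  show "V c0 c1 0 y \<ge> \<mu> * min (norm y ^ lowdeg (Vcoef c0 c1 0)) (norm y ^ highdeg (Vcoef c0 c1 0))"
    using V_ge degrees by simp
  have "\<mu> * min (norm y ^ 4) (norm y ^ highdeg (Vdotcoef c0 c1 0)) \<le> \<mu> * norm y ^ 4"
    using \<open>\<mu> > 0\<close> by (intro mult_left_mono) auto
  then show "Vdot c0 c1 0 y
      \<le> - \<mu> * min (norm y ^ lowdeg (Vdotcoef c0 c1 0)) (norm y ^ highdeg (Vdotcoef c0 c1 0))"
    using Vdot_le degrees by simp
qed

theorem claim1:
  fixes \<mu> :: real and Y :: "(real \<times> real) set"
  assumes "\<mu> > 0" and "finite Y" and "0 \<notin> Y"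
  shows "\<exists>c0 c1 c2 :: real. c0 \<noteq> c1 \<and>
    (\<forall>y\<in>Y. V c0 c1 c2 y > 0 \<and> Vdot c0 c1 c2 y < 0) \<and>
    (\<forall>y\<in>Y. V c0 c1 c2 y \<ge> \<mu> * min (norm y ^ lowdeg (Vcoef c0 c1 c2)) (norm y ^ highdeg (Vcoef c0 c1 c2))
          \<and> Vdot c0 c1 c2 y \<le> - \<mu> * min (norm y ^ lowdeg (Vdotcoef c0 c1 c2)) (norm y ^ highdeg (Vdotcoef c0 c1 c2)))"
proof -
  have nonzero: "y \<noteq> 0" if "y \<in> Y" for y
    using \<open>0 \<notin> Y\<close> that by blast
  then have "\<mu> * (fst y ^ 4 + snd y ^ 4) > 0" if "y \<in> Y" for y
    using \<open>\<mu> > 0\<close> sum_power4_fst_snd_pos that by simp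
  then obtain d where "d > 0"
    and cross: "\<And>y. y \<in> Y \<Longrightarrow> d * \<bar>fst y ^ 6 * snd y\<bar> \<le> \<mu> * (fst y ^ 4 + snd y ^ 4)"
    using finite_exists_pos_multiple_below[OF \<open>finite Y\<close>,
        of "\<lambda>y. \<mu> * (fst y ^ 4 + snd y ^ 4)" "\<lambda>y. fst y ^ 6 * snd y"]
    by blast
  have "2 * \<mu> \<noteq> 2 * \<mu> + d"
    using \<open>d > 0\<close> by simp
  then show ?thesis
    using diag_candidate_conditions[OF \<open>\<mu> > 0\<close> \<open>d > 0\<close> nonzero cross]
    by (intro exI[of _ "2 * \<mu>"] exI[of _ "2 * \<mu> + d"] exI[of _ 0] conjI ballI) simp_all
qed

end
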